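(* Every quasiorder on a set $A$ is the intersection of a family of half-space quasiorders on $A$.
   Context: A quasiorder on $A$ is a reflexive and transitive relation; $\Delta_A=\{(a,a)\mid a\in A\}$. A quasiorder $\alpha$ on $A$ is a half-space if there is a quasiorder $\beta$ on $A$ with $\alpha\cup\beta=A\times A$ and $\alpha\cap\beta=\Delta_A$. *)

theory Defs
  imports Main
begin

definition quasiorder_on :: "'a set \<Rightarrow> 'a rel \<Rightarrow> bool" where
  "quasiorder_on A r \<longleftrightarrow> r \<subseteq> A \<times> A \<and> refl_on A r \<and> trans r"

definition half_space_on :: "'a set \<Rightarrow> 'a rel \<Rightarrow> bool" where
  "half_space_on A \<alpha> \<longleftrightarrow> quasiorder_on A \<alpha> \<and>
     (\<exists>\<beta>. quasiorder_on A \<beta> \<and> \<alpha> \<union> \<beta> = A \<times> A \<and> \<alpha> \<inter> \<beta> = Id_on A)"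

end

theory Submission
  imports Defs
begin

text \<open>For any set \<open>U\<close>, the relation ``\<open>x \<in> U\<close> implies \<open>y \<in> U\<close>'' on \<open>A\<close> is a half-space:
  its complementary quasiorder is the identity together with \<open>U \<times> (A - U)\<close>.
  A quasiorder \<open>\<alpha>\<close> is the intersection of these half-spaces for \<open>U\<close> ranging over the
  principal up-sets \<open>\<alpha> `` {a}\<close>: if \<open>(x, y)\<close> lies in all of them, take \<open>a = x\<close>;
  reflexivity gives \<open>x \<in> \<alpha> `` {x}\<close>, hence \<open>y \<in> \<alpha> `` {x}\<close>.\<close>

definition cut_quasiorder :: "'a set \<Rightarrow> 'a set \<Rightarrow> 'a rel" where
  "cut_quasiorder A U = {(x, y) \<in> A \<times> A. x \<in> U \<longrightarrow> y \<in> U}"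

lemma half_space_on_cut_quasiorder: "half_space_on A (cut_quasiorder A U)"
proof -
  let ?\<beta> = "{(x, y) \<in> A \<times> A. x = y \<or> (x \<in> U \<and> y \<notin> U)}"
  have "quasiorder_on A (cut_quasiorder A U)"
    unfolding quasiorder_on_def cut_quasiorder_def refl_on_def trans_def by auto
  moreover have "quasiorder_on A ?\<beta>"
    unfolding quasiorder_on_def refl_on_def trans_def by auto
  moreover have "cut_quasiorder A U \<union> ?\<beta> = A \<times> A"
    unfolding cut_quasiorder_def by auto
  moreover have "cut_quasiorder A U \<inter> ?\<beta> = Id_on A"
    unfolding cut_quasiorder_def Id_on_def by auto
  ultimately show ?thesis
    unfolding half_space_on_def by blast
qed

lemma quasiorder_eq_Inter_cut_quasiorders:
  assumes "quasiorder_on A \<alpha>"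
  shows "\<alpha> = (A \<times> A) \<inter> (\<Inter>a\<in>A. cut_quasiorder A (\<alpha> `` {a}))"
proof
  have "\<alpha> \<subseteq> A \<times> A" and "trans \<alpha>"
    using assms unfolding quasiorder_on_def by auto
  then show "\<alpha> \<subseteq> (A \<times> A) \<inter> (\<Inter>a\<in>A. cut_quasiorder A (\<alpha> `` {a}))"
    unfolding cut_quasiorder_def trans_def by blast
next
  show "(A \<times> A) \<inter> (\<Inter>a\<in>A. cut_quasiorder A (\<alpha> `` {a})) \<subseteq> \<alpha>"
  proof (rule subrelI)
    fix x y
    assume "(x, y) \<in> (A \<times> A) \<inter> (\<Inter>a\<in>A. cut_quasiorder A (\<alpha> `` {a}))"
    then have "x \<in> A" and "(x, y) \<in> cut_quasiorder A (\<alpha> `` {x})"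
      by auto
    moreover have "(x, x) \<in> \<alpha>"
      using assms \<open>x \<in> A\<close> unfolding quasiorder_on_def refl_on_def by blast
    ultimately show "(x, y) \<in> \<alpha>"
      unfolding cut_quasiorder_def by auto
  qed
qed

theorem theorem2p9:
  fixes A :: "'a set" and \<alpha> :: "'a rel"
  assumes "quasiorder_on A \<alpha>"
  shows "\<exists>F. (\<forall>\<gamma>\<in>F. half_space_on A \<gamma>) \<and> \<alpha> = (A \<times> A) \<inter> \<Inter>F"
proof (intro exI conjI)
  let ?F = "(\<lambda>a. cut_quasiorder A (\<alpha> `` {a})) ` A"
  show "\<forall>\<gamma>\<in>?F. half_space_on A \<gamma>"
    using half_space_on_cut_quasiorder by blast
  show "\<alpha> = (A \<times> A) \<inter> \<Inter>?F"
    using quasiorder_eq_Inter_cut_quasiorders[OF assms] .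
qed

end
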